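(* Assume (A4) holds at $\bar u_{\bar e}$ and that there is $\sigma>0$ with $\beta+\bar e_\beta-(\alpha+\bar e_\alpha)\ge\sigma$ a.e. on $\Omega$. Take $0<\eta<\sigma/4$. Let $e\in B_\eta(\bar e)$ and let $\bar u_e\in\mathcal U_{ad}(e)$ satisfy the perturbed first-order optimality system, i.e. $\int_\Omega\varphi_{\bar u_e,e}(u-\bar u_e)dx\ge0$ for all $u\in\mathcal U_{ad}(e)$. Then there exist constants $c>0$, $\kappa'>0$ independent of $e$, and a control $u_e\in\mathcal U_{ad}(\bar e)$ with $\|\bar u_e-u_e\|_{L^\infty(\Omega)}\le\|e-\bar e\|_E$, such that $(\mathcal J'_u(\bar u_e,e)-\mathcal J'_u(\bar u_{\bar e},\bar e))(\bar u_{\bar e}-\bar u_e)\ge\kappa'\|\bar u_e-\bar u_{\bar e}\|_{L^1(\Omega)}^{1+1/\varkappa}+\frac12\mathcal J'_u(\bar u_{\bar e},\bar e)(u_e-\bar u_{\bar e})-c\big(\|e-\bar e\|_E^{1/\varkappa}+\|\varphi_{\bar u_e,e}-\varphi_{\bar u_{\bar e},\bar e}\|_{L^\infty(\Omega)}+\|\bar u_e-\bar u_{\bar e}\|_{L^1(\Omega)}\big)\|e-\bar e\|_E$.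
   Context: Let $\Omega\subset\mathbb R^N$, $N\in\{1,2,3\}$, be an open bounded domain with Lipschitz boundary $\Gamma$; $\alpha,\beta\in L^\infty(\Omega)$, $\alpha\le\beta$. $Ay=-\sum_{i,j}\partial_{x_j}(a_{ij}\partial_{x_i}y)$, $a_{ij}\in C(\bar\Omega)$ uniformly elliptic. $L,f$ Carathéodory, $C^2$ in $y$, satisfying (A1) $f(\cdot,0)\in L^{\bar p}$, $\bar p>N/2$, $\partial f/\partial y\ge0$, $|\partial f/\partial y|+|\partial^2f/\partial y^2|\le C_{f,M}$ for $|y|\le M$, $\partial^2f/\partial y^2(x,\cdot)$ uniformly continuous on $[-M,M]$ uniformly in $x$; (A2) $L(\cdot,0)\in L^1$, $|\partial L/\partial y|\le\psi_M\in L^{\bar p}$, $|\partial^2L/\partial y^2|\le C_{L,M}$ for $|y|\le M$, $\partial^2L/\partial y^2(x,\cdot)$ uniformly continuous likewise. $y_u$ solves $Ay+f(x,y)=u$, $y=0$ on $\Gamma$; $J(u)=\int_\Omega L(x,y_u)dx$. $E=L^2(\Omega)^2\times L^\infty(\Omega)^2$, $e=(e_y,e_J,e_\alpha,e_\beta)$ with the sum norm; $\mathcal U_{ad}(e)=\{u\in L^1:\alpha+e_\alpha\le u\le\beta+e_\beta\text{ a.e.}\}$; $\mathcal J(u,e)=J(u+e_y)+(e_J,y_{u+e_y})_{L^2}$. $\varphi_{u,e}$ solves $A^*\varphi+\frac{\partial f}{\partial y}(x,y_{u+e_y})\varphi=\frac{\partial L}{\partial y}(x,y_{u+e_y})+e_J$,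 $\varphi=0$ on $\Gamma$, so that $\mathcal J'_u(u,e)v=\int_\Omega\varphi_{u,e}v\,dx$. (A4) at $\bar u_{\bar e}$: $\bar u_{\bar e}\in\mathcal U_{ad}(\bar e)$, with adjoint state $\varphi_{\bar u_{\bar e}}$ (solution of $A^*\varphi+\frac{\partial f}{\partial y}(x,y_{\bar u_{\bar e}})\varphi=\frac{\partial L}{\partial y}(x,y_{\bar u_{\bar e}})$, $\varphi=0$ on $\Gamma$), satisfies $\int_\Omega\varphi_{\bar u_{\bar e}}(u-\bar u_{\bar e})\ge0$ for all $u\in\mathcal U_{ad}(\bar e)$ and there are $K,\varkappa>0$ with $|\{x:|\varphi_{\bar u_{\bar e}}(x)|\le\varepsilon\}|\le K\varepsilon^\varkappa$ for all $\varepsilon>0$. *)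

theory Defs
  imports "HOL-Analysis.Analysis" "HOL-Probability.Essential_Supremum"
begin

type_synonym 'n fn = "real^'n \<Rightarrow> real"

type_synonym 'n pert = "'n fn \<times> 'n fn \<times> 'n fn \<times> 'n fn"

definition Lp_mem :: "(real^'n) set \<Rightarrow> real \<Rightarrow> 'n fn \<Rightarrow> bool" where
  "Lp_mem \<Omega> p g \<longleftrightarrow> g \<in> borel_measurable (lebesgue_on \<Omega>)
      \<and> integrable (lebesgue_on \<Omega>) (\<lambda>x. \<bar>g x\<bar> powr p)"

definition L2_mem :: "(real^'n) set \<Rightarrow> 'n fn \<Rightarrow> bool" where
  "L2_mem \<Omega> g \<longleftrightarrow> g \<in> borel_measurable (lebesgue_on \<Omega>)
      \<and> integrable (lebesgue_on \<Omega>) (\<lambda>x. (g x)\<^sup>2)"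

definition Linf_mem :: "(real^'n) set \<Rightarrow> 'n fn \<Rightarrow> bool" where
  "Linf_mem \<Omega> g \<longleftrightarrow> g \<in> borel_measurable (lebesgue_on \<Omega>)
      \<and> (\<exists>C. AE x in lebesgue_on \<Omega>. \<bar>g x\<bar> \<le> C)"

definition L1_norm :: "(real^'n) set \<Rightarrow> 'n fn \<Rightarrow> real" where
  "L1_norm \<Omega> g = integral\<^sup>L (lebesgue_on \<Omega>) (\<lambda>x. \<bar>g x\<bar>)"

definition L2_norm :: "(real^'n) set \<Rightarrow> 'n fn \<Rightarrow> real" where
  "L2_norm \<Omega> g = sqrt (integral\<^sup>L (lebesgue_on \<Omega>) (\<lambda>x. (g x)\<^sup>2))"

definition Linf_norm :: "(real^'n) set \<Rightarrow> 'n fn \<Rightarrow> ereal" where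
  "Linf_norm \<Omega> g = esssup (lebesgue_on \<Omega>) (\<lambda>x. ereal \<bar>g x\<bar>)"

definition in_E :: "(real^'n) set \<Rightarrow> 'n pert \<Rightarrow> bool" where
  "in_E \<Omega> e = (case e of (ey, eJ, ea, eb) \<Rightarrow>
      L2_mem \<Omega> ey \<and> L2_mem \<Omega> eJ \<and> Linf_mem \<Omega> ea \<and> Linf_mem \<Omega> eb)"

definition E_norm :: "(real^'n) set \<Rightarrow> 'n pert \<Rightarrow> real" where
  "E_norm \<Omega> e = (case e of (ey, eJ, ea, eb) \<Rightarrow>
      L2_norm \<Omega> ey + L2_norm \<Omega> eJ + real_of_ereal (Linf_norm \<Omega> ea)
      + real_of_ereal (Linf_norm \<Omega> eb))"

definition pert_diff :: "'n pert \<Rightarrow> 'n pert \<Rightarrow> 'n pert" where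
  "pert_diff e e' = (case e of (ey, eJ, ea, eb) \<Rightarrow> case e' of (ey', eJ', ea', eb') \<Rightarrow>
      (\<lambda>x. ey x - ey' x, \<lambda>x. eJ x - eJ' x, \<lambda>x. ea x - ea' x, \<lambda>x. eb x - eb' x))"

definition e_y :: "'n pert \<Rightarrow> 'n fn" where "e_y e = fst e"
definition e_J :: "'n pert \<Rightarrow> 'n fn" where "e_J e = fst (snd e)"
definition e_alpha :: "'n pert \<Rightarrow> 'n fn" where "e_alpha e = fst (snd (snd e))"
definition e_beta :: "'n pert \<Rightarrow> 'n fn" where "e_beta e = snd (snd (snd e))"

definition Uad :: "(real^'n) set \<Rightarrow> 'n fn \<Rightarrow> 'n fn \<Rightarrow> 'n pert \<Rightarrow> 'n fn set" where
  "Uad \<Omega> \<alpha> \<beta> e = {u. integrable (lebesgue_on \<Omega>) u \<and>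
      (AE x in lebesgue_on \<Omega>. \<alpha> x + e_alpha e x \<le> u x \<and> u x \<le> \<beta> x + e_beta e x)}"

text \<open>Derivative J'_u(u,e) v = integral of phi_{u,e} v, phi the adjoint state.\<close>
definition Jprime :: "(real^'n) set \<Rightarrow> 'n fn \<Rightarrow> 'n fn \<Rightarrow> real" where
  "Jprime \<Omega> \<phi> v = integral\<^sup>L (lebesgue_on \<Omega>) (\<lambda>x. \<phi> x * v x)"

definition lipschitz_boundary :: "(real^'n) set \<Rightarrow> bool" where
  "lipschitz_boundary \<Omega> \<longleftrightarrow> (\<forall>x0\<in>frontier \<Omega>. \<exists>r>0. \<exists>\<nu> g C.
      norm \<nu> = 1 \<and> C-lipschitz_on UNIV g \<and>
      \<Omega> \<inter> ball x0 r = {x \<in> ball x0 r. (x - x0) \<bullet> \<nu> < g (x - ((x - x0) \<bullet> \<nu>) *\<^sub>R \<nu>)})"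

definition test_fun :: "(real^'n) set \<Rightarrow> 'n fn \<Rightarrow> (real^'n \<Rightarrow> real^'n) \<Rightarrow> bool" where
  "test_fun \<Omega> v Dv \<longleftrightarrow> (\<forall>x. (v has_derivative (\<lambda>h. Dv x \<bullet> h)) (at x))
      \<and> continuous_on UNIV Dv
      \<and> compact (closure {x. v x \<noteq> 0}) \<and> closure {x. v x \<noteq> 0} \<subseteq> \<Omega>"

definition H10 :: "(real^'n) set \<Rightarrow> 'n fn \<Rightarrow> (real^'n \<Rightarrow> real^'n) \<Rightarrow> bool" where
  "H10 \<Omega> y G \<longleftrightarrow> L2_mem \<Omega> y \<and> G \<in> borel_measurable (lebesgue_on \<Omega>)
      \<and> integrable (lebesgue_on \<Omega>) (\<lambda>x. (norm (G x))\<^sup>2)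
      \<and> (\<exists>\<psi> D\<psi>. (\<forall>k. test_fun \<Omega> (\<psi> k) (D\<psi> k))
          \<and> (\<lambda>k. integral\<^sup>L (lebesgue_on \<Omega>) (\<lambda>x. (\<psi> k x - y x)\<^sup>2)) \<longlonglongrightarrow> 0
          \<and> (\<lambda>k. integral\<^sup>L (lebesgue_on \<Omega>) (\<lambda>x. (norm (D\<psi> k x - G x))\<^sup>2)) \<longlonglongrightarrow> 0)"

text \<open>Weak solution y in H^1_0 \<inter> L^\<infinity> of  A y + f(x,y) = u,  y = 0 on the boundary,
  A y = - sum_{i,j} d_j (a_ij d_i y).\<close>
definition state_sol :: "(real^'n) set \<Rightarrow> ('n \<Rightarrow> 'n \<Rightarrow> 'n fn) \<Rightarrow> (real^'n \<Rightarrow> real \<Rightarrow> real)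
    \<Rightarrow> 'n fn \<Rightarrow> 'n fn \<Rightarrow> bool" where
  "state_sol \<Omega> a f u y \<longleftrightarrow> Linf_mem \<Omega> y \<and> (\<exists>G. H10 \<Omega> y G \<and>
      (\<forall>v Dv. test_fun \<Omega> v Dv \<longrightarrow>
         integrable (lebesgue_on \<Omega>)
           (\<lambda>x. (\<Sum>i\<in>UNIV. \<Sum>j\<in>UNIV. a i j x * (G x $ i) * (Dv x $ j)) + f x (y x) * v x)
       \<and> integral\<^sup>L (lebesgue_on \<Omega>)
           (\<lambda>x. (\<Sum>i\<in>UNIV. \<Sum>j\<in>UNIV. a i j x * (G x $ i) * (Dv x $ j)) + f x (y x) * v x)
         = integral\<^sup>L (lebesgue_on \<Omega>) (\<lambda>x. u x * v x)))"

text \<open>Weak solution phi in H^1_0 of  A^* phi + fy(x,y) phi = Ly(x,y) + eJ,  phi = 0 on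
  the boundary.\<close>
definition adjoint_sol :: "(real^'n) set \<Rightarrow> ('n \<Rightarrow> 'n \<Rightarrow> 'n fn) \<Rightarrow> (real^'n \<Rightarrow> real \<Rightarrow> real)
    \<Rightarrow> (real^'n \<Rightarrow> real \<Rightarrow> real) \<Rightarrow> 'n fn \<Rightarrow> 'n fn \<Rightarrow> 'n fn \<Rightarrow> bool" where
  "adjoint_sol \<Omega> a fy Ly y eJ \<phi> \<longleftrightarrow> (\<exists>G. H10 \<Omega> \<phi> G \<and>
      (\<forall>v Dv. test_fun \<Omega> v Dv \<longrightarrow>
         integrable (lebesgue_on \<Omega>)
           (\<lambda>x. (\<Sum>i\<in>UNIV. \<Sum>j\<in>UNIV. a i j x * (Dv x $ i) * (G x $ j)) + fy x (y x) * \<phi> x * v x)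
       \<and> integrable (lebesgue_on \<Omega>) (\<lambda>x. (Ly x (y x) + eJ x) * v x)
       \<and> integral\<^sup>L (lebesgue_on \<Omega>)
           (\<lambda>x. (\<Sum>i\<in>UNIV. \<Sum>j\<in>UNIV. a i j x * (Dv x $ i) * (G x $ j)) + fy x (y x) * \<phi> x * v x)
         = integral\<^sup>L (lebesgue_on \<Omega>) (\<lambda>x. (Ly x (y x) + eJ x) * v x)))"

definition C2_caratheodory :: "(real^'n) set \<Rightarrow> (real^'n \<Rightarrow> real \<Rightarrow> real)
    \<Rightarrow> (real^'n \<Rightarrow> real \<Rightarrow> real) \<Rightarrow> (real^'n \<Rightarrow> real \<Rightarrow> real) \<Rightarrow> bool" where
  "C2_caratheodory \<Omega> F F1 F2 \<longleftrightarrow>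
      (\<forall>y. (\<lambda>x. F x y) \<in> borel_measurable (lebesgue_on \<Omega>))
    \<and> (AE x in lebesgue_on \<Omega>. \<forall>y. (F x has_real_derivative F1 x y) (at y)
                                   \<and> (F1 x has_real_derivative F2 x y) (at y)
                                   \<and> isCont (F2 x) y)
    \<and> (\<forall>M>0. \<forall>\<epsilon>>0. \<exists>\<delta>>0. AE x in lebesgue_on \<Omega>. \<forall>y1 y2.
          \<bar>y1\<bar> \<le> M \<longrightarrow> \<bar>y2\<bar> \<le> M \<longrightarrow> \<bar>y1 - y2\<bar> < \<delta> \<longrightarrow> \<bar>F2 x y1 - F2 x y2\<bar> < \<epsilon>)"

end

theory Submission
  imports Defs
begin

text \<open>
  Both variational inequalities hold pointwise: each control sits at its lower bound where its
  adjoint state is positive and at its upper bound where it is negative, and the perturbed bounds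
  are within \<open>D = \<parallel>e - ebar\<parallel>\<close> of the reference ones. Comparing the signs pointwise gives
  \<open>(\<psi> - \<phi>) (u - w) \<ge> |\<phi>| max 0 (|u - w| - D) - |\<psi> - \<phi>| D\<close>, where \<open>\<phi>, u\<close> are the
  reference adjoint and control and \<open>\<psi>, w\<close> the perturbed ones. The admissible control
  \<open>u_e\<close> is the projection of \<open>u\<close> onto the reference box intersected with
  \<open>[w - D, w + D]\<close>; it moves \<open>u\<close> by at most \<open>max 0 (|u - w| - D)\<close>, so
  \<open>\<phi> (u_e - u)\<close> is dominated by the same excess term. Splitting the domain at the level set
  \<open>{|\<phi>| \<le> \<epsilon>}\<close>, whose measure is at most \<open>K \<epsilon>\<^sup>\<kappa>\<close>, with \<open>\<epsilon>\<close> of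
  order \<open>\<parallel>u - w\<parallel>\<^sub>1 powr (1 / \<kappa>)\<close>, bounds half of the integrated excess from below by
  \<open>\<kappa>' \<parallel>u - w\<parallel>\<^sub>1 powr (1 + 1 / \<kappa>)\<close> up to an error of order \<open>D powr (1 + 1 / \<kappa>)\<close>.
\<close>

definition bang_bang :: "real \<Rightarrow> real \<Rightarrow> real \<Rightarrow> real \<Rightarrow> bool" where
  "bang_bang lo hi \<phi> u \<longleftrightarrow> lo \<le> u \<and> u \<le> hi \<and> (0 < \<phi> \<longrightarrow> u = lo) \<and> (\<phi> < 0 \<longrightarrow> u = hi)"

lemma bang_bang_difference_estimate:
  assumes u: "bang_bang a b \<phi> u" and w: "bang_bang a' b' \<psi> w"
    and a: "\<bar>a - a'\<bar> \<le> D" and b: "\<bar>b - b'\<bar> \<le> D"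
  shows "\<bar>\<phi>\<bar> * max 0 (\<bar>u - w\<bar> - D) - \<bar>\<psi> - \<phi>\<bar> * D \<le> (\<psi> - \<phi>) * (u - w)"
proof -
  have "0 \<le> D" using a by linarith
  then have nonneg: "0 \<le> \<bar>\<psi> - \<phi>\<bar> * D" by simp
  consider "\<bar>u - w\<bar> \<le> D" | "D < \<bar>u - w\<bar>" by linarith
  then show ?thesis
  proof cases
    case 1
    have "\<bar>(\<psi> - \<phi>) * (u - w)\<bar> \<le> \<bar>\<psi> - \<phi>\<bar> * D"
      unfolding abs_mult using 1 by (intro mult_left_mono) auto
    then show ?thesis using 1 by auto
  next
    case 2
    have "\<phi> * (u - w) \<le> 0 \<and> 0 \<le> \<psi> * (u - w)"
    proof (cases "w < u")
      case True
      then have "\<phi> \<le> 0" "0 \<le> \<psi>" using 2 u w a b by (auto simp: bang_bang_def abs_le_iff)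
      then show ?thesis using True by (simp add: mult_nonpos_nonneg)
    next
      case False
      then have "0 \<le> \<phi>" "\<psi> \<le> 0" using 2 u w a b by (auto simp: bang_bang_def abs_le_iff)
      then show ?thesis using False by (simp add: mult_nonneg_nonpos mult_nonpos_nonpos)
    qed
    then have "\<bar>\<phi>\<bar> * \<bar>u - w\<bar> \<le> (\<psi> - \<phi>) * (u - w)"
      by (simp add: abs_mult[symmetric] abs_of_nonpos left_diff_distrib)
    moreover have "\<bar>\<phi>\<bar> * max 0 (\<bar>u - w\<bar> - D) \<le> \<bar>\<phi>\<bar> * \<bar>u - w\<bar>"
      using \<open>0 \<le> D\<close> by (intro mult_left_mono) auto
    ultimately show ?thesis using nonneg by linarith
  qed
qed

lemma clamp_to_perturbed_box:
  fixes a b a' b' u w D :: real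
  assumes "a \<le> u" "u \<le> b" "a' \<le> w" "w \<le> b'" "\<bar>a - a'\<bar> \<le> D" "\<bar>b - b'\<bar> \<le> D"
  defines "v \<equiv> max (max a (w - D)) (min (min b (w + D)) u)"
  shows "a \<le> v \<and> v \<le> b \<and> \<bar>w - v\<bar> \<le> D" "\<bar>v - u\<bar> \<le> max 0 (\<bar>u - w\<bar> - D)"
proof -
  have "a \<le> b" "a \<le> w + D" "w \<le> b + D" "0 \<le> D" using assms(1-6) by (auto simp: abs_le_iff)
  then show "a \<le> v \<and> v \<le> b \<and> \<bar>w - v\<bar> \<le> D" unfolding v_def by (auto simp: max_def min_def)
  show "\<bar>v - u\<bar> \<le> max 0 (\<bar>u - w\<bar> - D)"
    using assms(1,2) \<open>0 \<le> D\<close> unfolding v_def by (auto simp: max_def min_def abs_if)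
qed

lemma excess_lower_bound:
  fixes \<epsilon> t T D \<phi> :: real
  assumes "0 < \<epsilon>" "\<bar>t\<bar> \<le> T" "0 \<le> D"
  shows "\<epsilon> * \<bar>t\<bar> - \<epsilon> * D - \<epsilon> * T * of_bool (\<bar>\<phi>\<bar> \<le> \<epsilon>) \<le> \<bar>\<phi>\<bar> * max 0 (\<bar>t\<bar> - D)"
proof (cases "\<bar>\<phi>\<bar> \<le> \<epsilon>")
  case True
  have "\<epsilon> * \<bar>t\<bar> \<le> \<epsilon> * T" "0 \<le> \<epsilon> * D" using assms by (auto intro: mult_left_mono)
  then have "\<epsilon> * \<bar>t\<bar> - \<epsilon> * D - \<epsilon> * T * of_bool (\<bar>\<phi>\<bar> \<le> \<epsilon>) \<le> 0"
    using True by simp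
  also have "0 \<le> \<bar>\<phi>\<bar> * max 0 (\<bar>t\<bar> - D)" by simp
  finally show ?thesis .
next
  case False
  have "\<epsilon> * (\<bar>t\<bar> - D) \<le> \<epsilon> * max 0 (\<bar>t\<bar> - D)" using assms by (intro mult_left_mono) auto
  also have "\<dots> \<le> \<bar>\<phi>\<bar> * max 0 (\<bar>t\<bar> - D)" using False by (intro mult_right_mono) auto
  finally show ?thesis using False by (simp add: algebra_simps)
qed

lemma integrable_mult_bounded:
  fixes f g :: "'a \<Rightarrow> real"
  assumes "integrable M f" "g \<in> borel_measurable M" "AE x in M. \<bar>g x\<bar> \<le> C"
  shows "integrable M (\<lambda>x. f x * g x)"
proof (rule Bochner_Integration.integrable_bound[where f="\<lambda>x. \<bar>C\<bar> * f x"])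
  show "integrable M (\<lambda>x. \<bar>C\<bar> * f x)" using assms(1) by simp
  show "(\<lambda>x. f x * g x) \<in> borel_measurable M" using assms(1,2) by measurable
  show "AE x in M. norm (f x * g x) \<le> norm (\<bar>C\<bar> * f x)"
    using assms(3) by eventually_elim (simp add: abs_mult, metis abs_ge_zero mult.commute mult_left_mono)
qed

lemma integral_bang_bang_difference_estimate:
  fixes \<phi> \<psi> u w a b a' b' :: "'a \<Rightarrow> real"
  assumes \<phi>: "integrable M \<phi>" and \<psi>: "integrable M \<psi>"
    and meas: "u \<in> borel_measurable M" "w \<in> borel_measurable M"
    and bb_u: "AE x in M. bang_bang (a x) (b x) (\<phi> x) (u x)"
    and bb_w: "AE x in M. bang_bang (a' x) (b' x) (\<psi> x) (w x)"
    and close: "AE x in M. \<bar>a x - a' x\<bar> \<le> D \<and> \<bar>b x - b' x\<bar> \<le> D"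
    and bounded: "AE x in M. \<bar>u x - w x\<bar> \<le> T"
  shows "(\<integral>x. \<bar>\<phi> x\<bar> * max 0 (\<bar>u x - w x\<bar> - D) \<partial>M) - D * (\<integral>x. \<bar>\<psi> x - \<phi> x\<bar> \<partial>M)
         \<le> (\<integral>x. \<psi> x * (u x - w x) \<partial>M) - (\<integral>x. \<phi> x * (u x - w x) \<partial>M)"
proof -
  have diff_meas: "(\<lambda>x. u x - w x) \<in> borel_measurable M" using meas by measurable
  have int_\<phi>: "integrable M (\<lambda>x. \<phi> x * (u x - w x))"
    and int_\<psi>: "integrable M (\<lambda>x. \<psi> x * (u x - w x))"
    using integrable_mult_bounded[OF _ diff_meas bounded] \<phi> \<psi> by auto
  have "(\<lambda>x. max 0 (\<bar>u x - w x\<bar> - D)) \<in> borel_measurable M" using diff_meas by measurable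
  moreover have "AE x in M. \<bar>max 0 (\<bar>u x - w x\<bar> - D)\<bar> \<le> \<bar>T\<bar> + \<bar>D\<bar>"
    using bounded by eventually_elim auto
  ultimately have int_excess: "integrable M (\<lambda>x. \<bar>\<phi> x\<bar> * max 0 (\<bar>u x - w x\<bar> - D))"
    by (rule integrable_mult_bounded[OF integrable_abs[OF \<phi>]])
  have "(\<integral>x. \<bar>\<phi> x\<bar> * max 0 (\<bar>u x - w x\<bar> - D) \<partial>M) - D * (\<integral>x. \<bar>\<psi> x - \<phi> x\<bar> \<partial>M)
      = (\<integral>x. \<bar>\<phi> x\<bar> * max 0 (\<bar>u x - w x\<bar> - D) - \<bar>\<psi> x - \<phi> x\<bar> * D \<partial>M)"
    using int_excess \<phi> \<psi> by (simp add: Bochner_Integration.integral_diff mult.commute)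
  also have "\<dots> \<le> (\<integral>x. (\<psi> x - \<phi> x) * (u x - w x) \<partial>M)"
  proof (rule integral_mono_AE)
    show "integrable M (\<lambda>x. \<bar>\<phi> x\<bar> * max 0 (\<bar>u x - w x\<bar> - D) - \<bar>\<psi> x - \<phi> x\<bar> * D)"
      using int_excess \<phi> \<psi> by simp
    show "integrable M (\<lambda>x. (\<psi> x - \<phi> x) * (u x - w x))"
      using int_\<phi> int_\<psi> by (simp add: left_diff_distrib)
    show "AE x in M. \<bar>\<phi> x\<bar> * max 0 (\<bar>u x - w x\<bar> - D) - \<bar>\<psi> x - \<phi> x\<bar> * D \<le> (\<psi> x - \<phi> x) * (u x - w x)"
      using bb_u bb_w close by eventually_elim (simp add: bang_bang_difference_estimate)
  qed
  also have "\<dots> = (\<integral>x. \<psi> x * (u x - w x) \<partial>M) - (\<integral>x. \<phi> x * (u x - w x) \<partial>M)"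
    using int_\<phi> int_\<psi> by (simp add: left_diff_distrib)
  finally show ?thesis .
qed

lemma ereal_absorb_error_terms:
  fixes X A c1 q \<Delta> \<mu> L D :: real and m :: ereal
  assumes X: "A - c1 * q * D - D * \<Delta> \<le> X" and \<Delta>: "ereal \<Delta> \<le> ereal \<mu> * m"
    and nonneg: "0 \<le> m" "0 \<le> D" "0 \<le> q" "0 \<le> L" "0 \<le> c1" "0 \<le> \<mu>"
  shows "ereal A - ereal (c1 + \<mu> + 1) * (ereal q + m + ereal L) * ereal D \<le> ereal X"
proof (cases m)
  case (real m')
  have "D * \<Delta> \<le> D * (\<mu> * m')" using \<Delta> real nonneg by (intro mult_left_mono) auto
  moreover have "c1 * q * D + D * (\<mu> * m') \<le> (c1 + \<mu> + 1) * (q + m' + L) * D"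
    using real nonneg by (simp add: algebra_simps mult_nonneg_nonneg add_nonneg_nonneg)
  ultimately show ?thesis using X real by simp
next
  case PInf
  show ?thesis
  proof (cases "D = 0")
    case True
    then show ?thesis using X by (simp add: zero_ereal_def[symmetric])
  next
    case False
    then show ?thesis using PInf nonneg by simp
  qed
qed (use nonneg in simp)

lemma esssup_abs_nonneg:
  fixes g :: "'a \<Rightarrow> real"
  assumes "emeasure M (space M) \<noteq> 0"
  shows "0 \<le> esssup M (\<lambda>x. ereal \<bar>g x\<bar>)"
proof -
  have "ereal 0 = esssup M (\<lambda>_. ereal 0)" by (rule esssup_const[OF assms, symmetric])
  also have "\<dots> \<le> esssup M (\<lambda>x. ereal \<bar>g x\<bar>)" by (rule esssup_mono) auto
  finally show ?thesis by (simp add: zero_ereal_def)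
qed

context finite_measure
begin

lemma bang_bang_of_variational_inequality:
  fixes \<phi> a b u0 :: "'a \<Rightarrow> real"
  assumes \<phi>: "integrable M \<phi>"
    and meas: "a \<in> borel_measurable M" "b \<in> borel_measurable M" "u0 \<in> borel_measurable M"
    and bounded: "AE x in M. \<bar>a x\<bar> \<le> C \<and> \<bar>b x\<bar> \<le> C"
    and u0: "AE x in M. a x \<le> u0 x \<and> u0 x \<le> b x"
    and vi: "\<And>u. integrable M u \<Longrightarrow> (AE x in M. a x \<le> u x \<and> u x \<le> b x) \<Longrightarrow>
               0 \<le> (\<integral>x. \<phi> x * (u x - u0 x) \<partial>M)"
  shows "AE x in M. bang_bang (a x) (b x) (\<phi> x) (u0 x)"
proof -
  define v where "v x = (if 0 < \<phi> x then a x else if \<phi> x < 0 then b x else u0 x)" for x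
  have v_meas: "v \<in> borel_measurable M" unfolding v_def using \<phi> meas by measurable
  have v_bounded: "AE x in M. \<bar>v x\<bar> \<le> C"
    using bounded u0 by eventually_elim (auto simp: v_def)
  have "integrable M v"
    using integrable_const_bound[of v C] v_bounded v_meas by simp
  moreover have "AE x in M. a x \<le> v x \<and> v x \<le> b x"
    using u0 by eventually_elim (auto simp: v_def)
  ultimately have vi_v: "0 \<le> (\<integral>x. \<phi> x * (v x - u0 x) \<partial>M)" by (rule vi)
  have "AE x in M. \<bar>v x - u0 x\<bar> \<le> 2 * C"
    using bounded u0 by eventually_elim (auto simp: v_def)
  then have int: "integrable M (\<lambda>x. - (\<phi> x * (v x - u0 x)))"
    using integrable_mult_bounded[OF \<phi>] v_meas meas(3) by auto
  have nonneg: "AE x in M. 0 \<le> - (\<phi> x * (v x - u0 x))"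
    using u0 by eventually_elim (auto simp: v_def mult_nonneg_nonpos mult_nonpos_nonneg)
  have "(\<integral>x. - (\<phi> x * (v x - u0 x)) \<partial>M) = 0"
    using vi_v integral_nonneg_AE[OF nonneg] by simp
  then have "AE x in M. \<phi> x * (v x - u0 x) = 0"
    using integral_nonneg_eq_0_iff_AE[OF int nonneg] by simp
  then show ?thesis
    using u0 by eventually_elim (auto simp: v_def bang_bang_def)
qed

lemma integral_excess_lower_bound:
  fixes \<phi> t :: "'a \<Rightarrow> real"
  assumes \<phi>: "integrable M \<phi>"
    and t: "t \<in> borel_measurable M" "AE x in M. \<bar>t x\<bar> \<le> T"
    and "0 < \<epsilon>" "0 \<le> D"
  shows "\<epsilon> * (\<integral>x. \<bar>t x\<bar> \<partial>M) - \<epsilon> * D * measure M (space M)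
           - \<epsilon> * T * measure M {x \<in> space M. \<bar>\<phi> x\<bar> \<le> \<epsilon>}
         \<le> (\<integral>x. \<bar>\<phi> x\<bar> * max 0 (\<bar>t x\<bar> - D) \<partial>M)"
proof -
  define S where "S = {x \<in> space M. \<bar>\<phi> x\<bar> \<le> \<epsilon>}"
  have S: "S \<in> sets M" unfolding S_def using \<phi> by measurable
  then have int_S: "integrable M (indicator S :: 'a \<Rightarrow> real)"
    by (intro integrable_real_indicator) (auto simp: less_top[symmetric])
  have int_t: "integrable M (\<lambda>x. \<bar>t x\<bar>)"
    using integrable_const_bound[of t T] t by simp
  have "AE x in M. \<bar>max 0 (\<bar>t x\<bar> - D)\<bar> \<le> T"
    using t(2) by eventually_elim (use \<open>0 \<le> D\<close> in auto)
  then have int_excess: "integrable M (\<lambda>x. \<bar>\<phi> x\<bar> * max 0 (\<bar>t x\<bar> - D))"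
    using integrable_mult_bounded[of M "\<lambda>x. \<bar>\<phi> x\<bar>"] \<phi> t(1) by simp
  have "\<epsilon> * (\<integral>x. \<bar>t x\<bar> \<partial>M) - \<epsilon> * D * measure M (space M) - \<epsilon> * T * measure M S
      = (\<integral>x. \<epsilon> * \<bar>t x\<bar> - \<epsilon> * D - \<epsilon> * T * indicator S x \<partial>M)"
    using int_t int_S S integrable_const
    by (simp add: Bochner_Integration.integral_diff)
  also have "\<dots> \<le> (\<integral>x. \<bar>\<phi> x\<bar> * max 0 (\<bar>t x\<bar> - D) \<partial>M)"
  proof (rule integral_mono_AE)
    show "integrable M (\<lambda>x. \<epsilon> * \<bar>t x\<bar> - \<epsilon> * D - \<epsilon> * T * indicator S x)"
      using int_t int_S integrable_const by simp
    show "AE x in M. \<epsilon> * \<bar>t x\<bar> - \<epsilon> * D - \<epsilon> * T * indicator S x \<le> \<bar>\<phi> x\<bar> * max 0 (\<bar>t x\<bar> - D)"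
      using t(2) AE_space
    proof eventually_elim
      case (elim x)
      then show ?case
        using excess_lower_bound[OF \<open>0 < \<epsilon>\<close> _ \<open>0 \<le> D\<close>, of "t x" T "\<phi> x"]
        by (simp add: S_def indicator_def)
    qed
  qed fact
  finally show ?thesis unfolding S_def .
qed

lemma growth_condition_excess_bound:
  fixes \<phi> t :: "'a \<Rightarrow> real"
  assumes \<phi>: "integrable M \<phi>"
    and t: "t \<in> borel_measurable M" "AE x in M. \<bar>t x\<bar> \<le> T"
    and T: "0 < T" and K: "0 < K" and \<kappa>: "0 < \<kappa>" and D: "0 \<le> D"
    and growth: "\<And>\<epsilon>. 0 < \<epsilon> \<Longrightarrow> measure M {x \<in> space M. \<bar>\<phi> x\<bar> \<le> \<epsilon>} \<le> K * \<epsilon> powr \<kappa>"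
  defines "c \<equiv> (1 / (2 * T * K)) powr (1 / \<kappa>) / 8"
  shows "c * (\<integral>x. \<bar>t x\<bar> \<partial>M) powr (1 + 1 / \<kappa>)
         \<le> 1 / 2 * (\<integral>x. \<bar>\<phi> x\<bar> * max 0 (\<bar>t x\<bar> - D) \<partial>M)
           + c * (4 * measure M (space M)) powr (1 + 1 / \<kappa>) * D powr (1 / \<kappa>) * D"
proof -
  define L where "L = (\<integral>x. \<bar>t x\<bar> \<partial>M)"
  define \<mu> where "\<mu> = measure M (space M)"
  define G where "G = (\<integral>x. \<bar>\<phi> x\<bar> * max 0 (\<bar>t x\<bar> - D) \<partial>M)"
  have "0 \<le> L" "0 \<le> \<mu>" "0 \<le> G" "0 < c"
    unfolding L_def \<mu>_def G_def c_def using T K by (auto intro: integral_nonneg_AE)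
  have "c * L powr (1 + 1 / \<kappa>) \<le> 1 / 2 * G + c * (4 * \<mu>) powr (1 + 1 / \<kappa>) * D powr (1 / \<kappa>) * D"
  proof (cases "L \<le> 4 * \<mu> * D")
    case True
    have "L powr (1 + 1 / \<kappa>) \<le> (4 * \<mu> * D) powr (1 + 1 / \<kappa>)"
      using True \<open>0 \<le> L\<close> \<kappa> by (intro powr_mono2) auto
    also have "\<dots> = (4 * \<mu>) powr (1 + 1 / \<kappa>) * D powr (1 / \<kappa>) * D"
      using \<open>0 \<le> \<mu>\<close> D by (simp add: powr_mult powr_add)
    finally have "c * L powr (1 + 1 / \<kappa>) \<le> c * ((4 * \<mu>) powr (1 + 1 / \<kappa>) * D powr (1 / \<kappa>) * D)"
      using \<open>0 < c\<close> by (intro mult_left_mono) auto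
    then show ?thesis using \<open>0 \<le> G\<close> by (simp add: mult.assoc)
  next
    case False
    moreover have "0 \<le> 4 * \<mu> * D" using \<open>0 \<le> \<mu>\<close> D by simp
    ultimately have "0 < L" by linarith
    txt \<open>This \<open>\<epsilon>\<close> makes the level set \<open>{|\<phi>| \<le> \<epsilon>}\<close> cost at most \<open>\<epsilon> L / 2\<close>.\<close>
    define \<epsilon> where "\<epsilon> = (L / (2 * T * K)) powr (1 / \<kappa>)"
    have "0 < \<epsilon>" unfolding \<epsilon>_def using \<open>0 < L\<close> T K by simp
    have "\<epsilon> powr \<kappa> = L / (2 * T * K)"
      unfolding \<epsilon>_def using \<kappa> \<open>0 < L\<close> T K by (simp add: powr_powr)
    have "T * measure M {x \<in> space M. \<bar>\<phi> x\<bar> \<le> \<epsilon>} \<le> T * (K * \<epsilon> powr \<kappa>)"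
      using growth[OF \<open>0 < \<epsilon>\<close>] T by (intro mult_left_mono) auto
    also have "\<dots> = L / 2"
      using \<open>\<epsilon> powr \<kappa> = L / (2 * T * K)\<close> T K by simp
    finally have "\<epsilon> * T * measure M {x \<in> space M. \<bar>\<phi> x\<bar> \<le> \<epsilon>} \<le> \<epsilon> * (L / 2)"
      using \<open>0 < \<epsilon>\<close> unfolding mult.assoc by (intro mult_left_mono) auto
    moreover have "\<epsilon> * D * \<mu> \<le> \<epsilon> * (L / 4)"
      using False \<open>0 < \<epsilon>\<close> unfolding mult.assoc by (intro mult_left_mono) (auto simp: algebra_simps)
    ultimately have "\<epsilon> * L / 4 \<le> G"
      using integral_excess_lower_bound[OF \<phi> t \<open>0 < \<epsilon>\<close> D]
      unfolding L_def[symmetric] \<mu>_def[symmetric] G_def[symmetric] by linarith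
    moreover have "\<epsilon> * L = 8 * (c * L powr (1 + 1 / \<kappa>))"
      unfolding \<epsilon>_def c_def using \<open>0 < L\<close> T K by (simp add: powr_add powr_divide)
    moreover have "0 \<le> c * (4 * \<mu>) powr (1 + 1 / \<kappa>) * D powr (1 / \<kappa>) * D"
      using \<open>0 < c\<close> D by simp
    ultimately show ?thesis by linarith
  qed
  then show ?thesis unfolding L_def \<mu>_def G_def .
qed

lemma bang_bang_stability_estimate:
  fixes \<phi> \<psi> u w a b a' b' :: "'a \<Rightarrow> real"
  assumes \<phi>: "integrable M \<phi>" and \<psi>: "integrable M \<psi>"
    and meas: "a \<in> borel_measurable M" "b \<in> borel_measurable M"
      "u \<in> borel_measurable M" "w \<in> borel_measurable M"
    and bb_u: "AE x in M. bang_bang (a x) (b x) (\<phi> x) (u x)"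
    and bb_w: "AE x in M. bang_bang (a' x) (b' x) (\<psi> x) (w x)"
    and close: "AE x in M. \<bar>a x - a' x\<bar> \<le> D \<and> \<bar>b x - b' x\<bar> \<le> D"
    and bounded: "AE x in M. \<bar>a x\<bar> \<le> C \<and> \<bar>b x\<bar> \<le> C"
    and D: "0 \<le> D" and T: "0 < T" "2 * C + D \<le> T" and K: "0 < K" and \<kappa>: "0 < \<kappa>"
    and growth: "\<And>\<epsilon>. 0 < \<epsilon> \<Longrightarrow> measure M {x \<in> space M. \<bar>\<phi> x\<bar> \<le> \<epsilon>} \<le> K * \<epsilon> powr \<kappa>"
  defines "c \<equiv> (1 / (2 * T * K)) powr (1 / \<kappa>) / 8"
  shows "\<exists>v \<in> borel_measurable M. (AE x in M. a x \<le> v x \<and> v x \<le> b x \<and> \<bar>w x - v x\<bar> \<le> D) \<and>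
           c * (\<integral>x. \<bar>w x - u x\<bar> \<partial>M) powr (1 + 1 / \<kappa>) + 1 / 2 * (\<integral>x. \<phi> x * (v x - u x) \<partial>M)
           - c * (4 * measure M (space M)) powr (1 + 1 / \<kappa>) * D powr (1 / \<kappa>) * D
           - D * (\<integral>x. \<bar>\<psi> x - \<phi> x\<bar> \<partial>M)
         \<le> (\<integral>x. \<psi> x * (u x - w x) \<partial>M) - (\<integral>x. \<phi> x * (u x - w x) \<partial>M)"
proof -
  define v where "v x = max (max (a x) (w x - D)) (min (min (b x) (w x + D)) (u x))" for x
  have v_meas: "v \<in> borel_measurable M" unfolding v_def using meas by measurable
  have diff_meas: "(\<lambda>x. u x - w x) \<in> borel_measurable M" using meas by measurable
  have pointwise: "AE x in M. (a x \<le> v x \<and> v x \<le> b x \<and> \<bar>w x - v x\<bar> \<le> D)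
      \<and> \<bar>v x - u x\<bar> \<le> max 0 (\<bar>u x - w x\<bar> - D) \<and> \<bar>u x - w x\<bar> \<le> T"
    using bb_u bb_w close bounded
  proof eventually_elim
    case (elim x)
    then have box: "a x \<le> u x" "u x \<le> b x" "a' x \<le> w x" "w x \<le> b' x"
      and "\<bar>a x - a' x\<bar> \<le> D" "\<bar>b x - b' x\<bar> \<le> D"
      by (auto simp: bang_bang_def)
    note clamp = clamp_to_perturbed_box[OF this, folded v_def]
    have "\<bar>u x - w x\<bar> \<le> T" using box elim T by (auto simp: abs_le_iff)
    then show ?case using clamp by simp
  qed
  have "AE x in M. \<bar>u x - w x\<bar> \<le> T" using pointwise by eventually_elim simp
  note excess = growth_condition_excess_bound[OF \<phi> diff_meas this T(1) K \<kappa> D growth, folded c_def]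
    and difference = integral_bang_bang_difference_estimate[OF \<phi> \<psi> meas(3,4) bb_u bb_w close this]
  have "(\<integral>x. \<phi> x * (v x - u x) \<partial>M) \<le> (\<integral>x. \<bar>\<phi> x\<bar> * max 0 (\<bar>u x - w x\<bar> - D) \<partial>M)"
  proof (rule integral_mono_AE)
    have "AE x in M. \<bar>v x - u x\<bar> \<le> T" using pointwise by eventually_elim (use D in auto)
    then show "integrable M (\<lambda>x. \<phi> x * (v x - u x))"
      using integrable_mult_bounded[OF \<phi>] v_meas meas(3) by simp
    have "AE x in M. \<bar>max 0 (\<bar>u x - w x\<bar> - D)\<bar> \<le> T" using pointwise by eventually_elim (use D in auto)
    then show "integrable M (\<lambda>x. \<bar>\<phi> x\<bar> * max 0 (\<bar>u x - w x\<bar> - D))"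
      using integrable_mult_bounded[OF integrable_abs[OF \<phi>]] diff_meas by simp
    show "AE x in M. \<phi> x * (v x - u x) \<le> \<bar>\<phi> x\<bar> * max 0 (\<bar>u x - w x\<bar> - D)"
      using pointwise
    proof eventually_elim
      case (elim x)
      have "\<phi> x * (v x - u x) \<le> \<bar>\<phi> x\<bar> * \<bar>v x - u x\<bar>" by (simp add: abs_mult[symmetric])
      also have "\<dots> \<le> \<bar>\<phi> x\<bar> * max 0 (\<bar>u x - w x\<bar> - D)" using elim by (intro mult_left_mono) auto
      finally show ?case .
    qed
  qed
  moreover have "(\<integral>x. \<bar>w x - u x\<bar> \<partial>M) = (\<integral>x. \<bar>u x - w x\<bar> \<partial>M)" by (simp add: abs_minus_commute)
  ultimately show ?thesis
    using v_meas pointwise excess difference by (intro bexI[of _ v]) (auto elim: eventually_mono)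
qed

lemma integral_abs_le_measure_esssup:
  fixes g :: "'a \<Rightarrow> real"
  assumes "integrable M g" and "emeasure M (space M) \<noteq> 0"
  shows "ereal (\<integral>x. \<bar>g x\<bar> \<partial>M) \<le> ereal (measure M (space M)) * esssup M (\<lambda>x. ereal \<bar>g x\<bar>)"
proof -
  have "0 < measure M (space M)"
    using assms(2) emeasure_eq_measure by (simp add: zero_less_measure_iff)
  note esssup_abs_nonneg[OF assms(2), of g]
  then show ?thesis
  proof (cases "esssup M (\<lambda>x. ereal \<bar>g x\<bar>)")
    case (real m)
    have "AE x in M. \<bar>g x\<bar> \<le> m"
      using esssup_AE[of "\<lambda>x. ereal \<bar>g x\<bar>" M] real by simp
    then have "(\<integral>x. \<bar>g x\<bar> \<partial>M) \<le> (\<integral>x. m \<partial>M)"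
      using assms(1) by (intro integral_mono_AE) auto
    then show ?thesis using real by (simp add: mult.commute)
  qed (use \<open>0 < measure M (space M)\<close> in simp_all)
qed

lemma bang_bang_stability_estimate_esssup:
  fixes \<phi> \<psi> u w a b a' b' :: "'a \<Rightarrow> real"
  assumes pos: "emeasure M (space M) \<noteq> 0"
    and \<phi>: "integrable M \<phi>" and \<psi>: "integrable M \<psi>"
    and meas: "a \<in> borel_measurable M" "b \<in> borel_measurable M"
      "u \<in> borel_measurable M" "w \<in> borel_measurable M"
    and bb_u: "AE x in M. bang_bang (a x) (b x) (\<phi> x) (u x)"
    and bb_w: "AE x in M. bang_bang (a' x) (b' x) (\<psi> x) (w x)"
    and close: "AE x in M. \<bar>a x - a' x\<bar> \<le> D \<and> \<bar>b x - b' x\<bar> \<le> D"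
    and bounded: "AE x in M. \<bar>a x\<bar> \<le> C \<and> \<bar>b x\<bar> \<le> C"
    and D: "0 \<le> D" and T: "0 < T" "2 * C + D \<le> T" and K: "0 < K" and \<kappa>: "0 < \<kappa>"
    and growth: "\<And>\<epsilon>. 0 < \<epsilon> \<Longrightarrow> measure M {x \<in> space M. \<bar>\<phi> x\<bar> \<le> \<epsilon>} \<le> K * \<epsilon> powr \<kappa>"
  defines "c \<equiv> (1 / (2 * T * K)) powr (1 / \<kappa>) / 8"
    and "c' \<equiv> (1 / (2 * T * K)) powr (1 / \<kappa>) / 8 * (4 * measure M (space M)) powr (1 + 1 / \<kappa>) + measure M (space M) + 1"
  shows "\<exists>v. integrable M v \<and> (AE x in M. a x \<le> v x \<and> v x \<le> b x)
           \<and> esssup M (\<lambda>x. ereal \<bar>w x - v x\<bar>) \<le> ereal D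
           \<and> ereal (c * (\<integral>x. \<bar>w x - u x\<bar> \<partial>M) powr (1 + 1 / \<kappa>))
               + ereal (1 / 2 * (\<integral>x. \<phi> x * (v x - u x) \<partial>M))
               - ereal c' * (ereal (D powr (1 / \<kappa>)) + esssup M (\<lambda>x. ereal \<bar>\<psi> x - \<phi> x\<bar>)
                             + ereal (\<integral>x. \<bar>w x - u x\<bar> \<partial>M)) * ereal D
             \<le> ereal ((\<integral>x. \<psi> x * (u x - w x) \<partial>M) - (\<integral>x. \<phi> x * (u x - w x) \<partial>M))"
proof -
  obtain v where v_meas: "v \<in> borel_measurable M"
    and box: "AE x in M. a x \<le> v x \<and> v x \<le> b x \<and> \<bar>w x - v x\<bar> \<le> D"
    and estimate: "c * (\<integral>x. \<bar>w x - u x\<bar> \<partial>M) powr (1 + 1 / \<kappa>) + 1 / 2 * (\<integral>x. \<phi> x * (v x - u x) \<partial>M)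
           - c * (4 * measure M (space M)) powr (1 + 1 / \<kappa>) * D powr (1 / \<kappa>) * D
           - D * (\<integral>x. \<bar>\<psi> x - \<phi> x\<bar> \<partial>M)
         \<le> (\<integral>x. \<psi> x * (u x - w x) \<partial>M) - (\<integral>x. \<phi> x * (u x - w x) \<partial>M)"
    using bang_bang_stability_estimate[OF \<phi> \<psi> meas bb_u bb_w close bounded D T K \<kappa> growth]
    unfolding c_def by blast
  have "AE x in M. \<bar>v x\<bar> \<le> C" using box bounded by eventually_elim auto
  then have "integrable M v" using integrable_const_bound[of v C] v_meas by simp
  moreover have "esssup M (\<lambda>x. ereal \<bar>w x - v x\<bar>) \<le> ereal D"
    using box meas(4) v_meas by (intro esssup_I) (auto elim: eventually_mono)
  moreover have "0 \<le> c" unfolding c_def by simp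
  ultimately show ?thesis
    using box ereal_absorb_error_terms[OF _ integral_abs_le_measure_esssup[OF _ pos] esssup_abs_nonneg[OF pos] D]
      estimate \<phi> \<psi>
    unfolding c'_def c_def[symmetric] by (intro exI[of _ v]) (auto elim: eventually_mono)
qed

end

lemma lebesgue_on_open_bounded:
  fixes \<Omega> :: "'a::euclidean_space set"
  assumes "open \<Omega>" "bounded \<Omega>" "\<Omega> \<noteq> {}"
  shows "finite_measure (lebesgue_on \<Omega>)" "emeasure (lebesgue_on \<Omega>) (space (lebesgue_on \<Omega>)) \<noteq> 0"
proof -
  have \<Omega>: "\<Omega> \<in> lmeasurable" using assms(2,1) by (rule lmeasurable_open)
  then show "finite_measure (lebesgue_on \<Omega>)" by (rule finite_measure_lebesgue_on)
  obtain x r where "0 < r" "ball x r \<subseteq> \<Omega>" using assms(1,3) open_contains_ball by blast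
  then have "0 < emeasure lebesgue (ball x r)"
    using content_ball_pos[of r x] emeasure_lborel_ball_finite[of x r]
    by (simp add: emeasure_completion emeasure_eq_ennreal_measure)
  also have "\<dots> \<le> emeasure lebesgue \<Omega>" using \<open>ball x r \<subseteq> \<Omega>\<close> \<Omega> by (intro emeasure_mono) auto
  finally show "emeasure (lebesgue_on \<Omega>) (space (lebesgue_on \<Omega>)) \<noteq> 0"
    using \<Omega> by (simp add: emeasure_restrict_space fmeasurableD)
qed

lemma in_E_Linf_mem:
  assumes "in_E \<Omega> e"
  shows "Linf_mem \<Omega> (e_alpha e)" "Linf_mem \<Omega> (e_beta e)"
  using assms by (auto simp: in_E_def e_alpha_def e_beta_def split: prod.splits)

lemma Linf_mem_add:
  assumes "Linf_mem \<Omega> f" "Linf_mem \<Omega> g"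
  shows "Linf_mem \<Omega> (\<lambda>x. f x + g x)"
proof -
  obtain Cf Cg where "AE x in lebesgue_on \<Omega>. \<bar>f x\<bar> \<le> Cf" "AE x in lebesgue_on \<Omega>. \<bar>g x\<bar> \<le> Cg"
    using assms unfolding Linf_mem_def by blast
  then have "AE x in lebesgue_on \<Omega>. \<bar>f x + g x\<bar> \<le> Cf + Cg" by eventually_elim auto
  then show ?thesis using assms unfolding Linf_mem_def by auto
qed

lemma Linf_mem_diff:
  assumes "Linf_mem \<Omega> f" "Linf_mem \<Omega> g"
  shows "Linf_mem \<Omega> (\<lambda>x. f x - g x)"
proof -
  obtain Cf Cg where "AE x in lebesgue_on \<Omega>. \<bar>f x\<bar> \<le> Cf" "AE x in lebesgue_on \<Omega>. \<bar>g x\<bar> \<le> Cg"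
    using assms unfolding Linf_mem_def by blast
  then have "AE x in lebesgue_on \<Omega>. \<bar>f x - g x\<bar> \<le> Cf + Cg" by eventually_elim auto
  then show ?thesis using assms unfolding Linf_mem_def by auto
qed

lemma Linf_mem_common_bound:
  assumes "Linf_mem \<Omega> f" "Linf_mem \<Omega> g"
  obtains C where "0 \<le> C" "AE x in lebesgue_on \<Omega>. \<bar>f x\<bar> \<le> C \<and> \<bar>g x\<bar> \<le> C"
proof -
  obtain Cf Cg where "AE x in lebesgue_on \<Omega>. \<bar>f x\<bar> \<le> Cf" "AE x in lebesgue_on \<Omega>. \<bar>g x\<bar> \<le> Cg"
    using assms unfolding Linf_mem_def by blast
  then have "AE x in lebesgue_on \<Omega>. \<bar>f x\<bar> \<le> \<bar>Cf\<bar> + \<bar>Cg\<bar> \<and> \<bar>g x\<bar> \<le> \<bar>Cf\<bar> + \<bar>Cg\<bar>"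
    by eventually_elim auto
  then show thesis by (rule that[rotated]) simp
qed

lemma Linf_norm_bounds:
  assumes "emeasure (lebesgue_on \<Omega>) (space (lebesgue_on \<Omega>)) \<noteq> 0" "Linf_mem \<Omega> g"
  shows "0 \<le> real_of_ereal (Linf_norm \<Omega> g)"
    "AE x in lebesgue_on \<Omega>. \<bar>g x\<bar> \<le> real_of_ereal (Linf_norm \<Omega> g)"
proof -
  obtain C where C: "AE x in lebesgue_on \<Omega>. \<bar>g x\<bar> \<le> C" using assms(2) unfolding Linf_mem_def by blast
  have "Linf_norm \<Omega> g \<le> ereal C"
    unfolding Linf_norm_def using assms(2) C by (intro esssup_I) (auto simp: Linf_mem_def elim: eventually_mono)
  moreover have "0 \<le> Linf_norm \<Omega> g" unfolding Linf_norm_def by (rule esssup_abs_nonneg[OF assms(1)])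
  ultimately have finite: "Linf_norm \<Omega> g = ereal (real_of_ereal (Linf_norm \<Omega> g))"
    by (cases "Linf_norm \<Omega> g") auto
  then show "0 \<le> real_of_ereal (Linf_norm \<Omega> g)" using \<open>0 \<le> Linf_norm \<Omega> g\<close> by (simp add: real_of_ereal_pos)
  have "AE x in lebesgue_on \<Omega>. ereal \<bar>g x\<bar> \<le> Linf_norm \<Omega> g"
    unfolding Linf_norm_def by (rule esssup_AE)
  then show "AE x in lebesgue_on \<Omega>. \<bar>g x\<bar> \<le> real_of_ereal (Linf_norm \<Omega> g)"
    by eventually_elim (subst (asm) finite, simp)
qed

lemma E_norm_pert_diff_bounds:
  assumes pos: "emeasure (lebesgue_on \<Omega>) (space (lebesgue_on \<Omega>)) \<noteq> 0"
    and "in_E \<Omega> e" "in_E \<Omega> e'"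
  shows "0 \<le> E_norm \<Omega> (pert_diff e e')"
    "AE x in lebesgue_on \<Omega>. \<bar>e_alpha e x - e_alpha e' x\<bar> \<le> E_norm \<Omega> (pert_diff e e')
                           \<and> \<bar>e_beta e x - e_beta e' x\<bar> \<le> E_norm \<Omega> (pert_diff e e')"
proof -
  have L2: "0 \<le> L2_norm \<Omega> g" for g
    unfolding L2_norm_def by (simp add: integral_nonneg_AE)
  have E_norm_eq: "E_norm \<Omega> (pert_diff e e') = L2_norm \<Omega> (\<lambda>x. e_y e x - e_y e' x)
      + L2_norm \<Omega> (\<lambda>x. e_J e x - e_J e' x) + real_of_ereal (Linf_norm \<Omega> (\<lambda>x. e_alpha e x - e_alpha e' x))
      + real_of_ereal (Linf_norm \<Omega> (\<lambda>x. e_beta e x - e_beta e' x))"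
    by (simp add: E_norm_def pert_diff_def e_y_def e_J_def e_alpha_def e_beta_def split: prod.splits)
  note \<alpha> = Linf_norm_bounds[OF pos Linf_mem_diff[OF in_E_Linf_mem(1)[OF assms(2)] in_E_Linf_mem(1)[OF assms(3)]]]
    and \<beta> = Linf_norm_bounds[OF pos Linf_mem_diff[OF in_E_Linf_mem(2)[OF assms(2)] in_E_Linf_mem(2)[OF assms(3)]]]
  show "0 \<le> E_norm \<Omega> (pert_diff e e')"
    unfolding E_norm_eq using \<alpha>(1) \<beta>(1) L2 by (simp add: add_nonneg_nonneg)
  show "AE x in lebesgue_on \<Omega>. \<bar>e_alpha e x - e_alpha e' x\<bar> \<le> E_norm \<Omega> (pert_diff e e')
                           \<and> \<bar>e_beta e x - e_beta e' x\<bar> \<le> E_norm \<Omega> (pert_diff e e')"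
    using \<alpha>(2) \<beta>(2) unfolding E_norm_eq
    by eventually_elim (use \<alpha>(1) \<beta>(1) L2 in \<open>smt (verit)\<close>)
qed

lemma adjoint_sol_integrable:
  assumes "finite_measure (lebesgue_on \<Omega>)" "adjoint_sol \<Omega> a fy Ly y eJ \<phi>"
  shows "integrable (lebesgue_on \<Omega>) \<phi>"
proof -
  have "L2_mem \<Omega> \<phi>" using assms(2) unfolding adjoint_sol_def H10_def by blast
  then show ?thesis
    unfolding L2_mem_def using finite_measure.square_integrable_imp_integrable[OF assms(1)] by blast
qed

lemma bang_bang_of_Uad_variational_inequality:
  assumes fin: "finite_measure (lebesgue_on \<Omega>)" and "Linf_mem \<Omega> \<alpha>" "Linf_mem \<Omega> \<beta>" "in_E \<Omega> e"
    and \<phi>: "integrable (lebesgue_on \<Omega>) \<phi>" and u0: "u0 \<in> Uad \<Omega> \<alpha> \<beta> e"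
    and vi: "\<forall>u\<in>Uad \<Omega> \<alpha> \<beta> e. 0 \<le> Jprime \<Omega> \<phi> (\<lambda>x. u x - u0 x)"
  shows "AE x in lebesgue_on \<Omega>. bang_bang (\<alpha> x + e_alpha e x) (\<beta> x + e_beta e x) (\<phi> x) (u0 x)"
proof -
  have lo: "Linf_mem \<Omega> (\<lambda>x. \<alpha> x + e_alpha e x)" and hi: "Linf_mem \<Omega> (\<lambda>x. \<beta> x + e_beta e x)"
    using assms(2-4) by (auto intro: Linf_mem_add in_E_Linf_mem)
  obtain C where "AE x in lebesgue_on \<Omega>. \<bar>\<alpha> x + e_alpha e x\<bar> \<le> C \<and> \<bar>\<beta> x + e_beta e x\<bar> \<le> C"
    using Linf_mem_common_bound[OF lo hi] by blast
  moreover have "u0 \<in> borel_measurable (lebesgue_on \<Omega>)" using u0 unfolding Uad_def by auto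
  ultimately show ?thesis
    using finite_measure.bang_bang_of_variational_inequality[OF fin \<phi>] lo hi u0 vi
    unfolding Linf_mem_def Uad_def Jprime_def by auto
qed

lemma measure_lebesgue_on_le:
  assumes "\<Omega> \<in> sets lebesgue" "emeasure lebesgue {x \<in> \<Omega>. P x} \<le> ennreal r" "0 \<le> r"
  shows "measure (lebesgue_on \<Omega>) {x \<in> space (lebesgue_on \<Omega>). P x} \<le> r"
proof -
  have "emeasure (lebesgue_on \<Omega>) {x \<in> space (lebesgue_on \<Omega>). P x} \<le> ennreal r"
    using assms(1,2) by (subst emeasure_restrict_space) auto
  then show ?thesis
    unfolding measure_def using assms(3) enn2real_mono[of _ "ennreal r"] by fastforce
qed

theorem lemma4p13:
  fixes \<Omega> :: "(real^'n) set"
    and a :: "'n \<Rightarrow> 'n \<Rightarrow> 'n fn"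
    and f fy fyy L Ly Lyy :: "real^'n \<Rightarrow> real \<Rightarrow> real"
    and pbar :: real
    and \<alpha> \<beta> :: "'n fn"
    and ebar :: "'n pert"
    and ubar ybar phibar :: "'n fn"
    and K varkappa \<sigma> \<eta> :: real
  assumes dim: "CARD('n) \<in> {1, 2, 3}"
    and dom: "open \<Omega>" "bounded \<Omega>" "connected \<Omega>" "\<Omega> \<noteq> {}" "lipschitz_boundary \<Omega>"
    and ab: "Linf_mem \<Omega> \<alpha>" "Linf_mem \<Omega> \<beta>" "AE x in lebesgue_on \<Omega>. \<alpha> x \<le> \<beta> x"
    and a_cont: "\<forall>i j. continuous_on (closure \<Omega>) (a i j)"
    and a_ell: "\<exists>\<Lambda>>0. \<forall>x\<in>closure \<Omega>. \<forall>\<xi>::real^'n.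
                   (\<Sum>i\<in>UNIV. \<Sum>j\<in>UNIV. a i j x * \<xi> $ i * \<xi> $ j) \<ge> \<Lambda> * (norm \<xi>)\<^sup>2"
    and pbar: "pbar > real CARD('n) / 2"
    \<comment> \<open>(A1)\<close>
    and A1_car: "C2_caratheodory \<Omega> f fy fyy"
    and A1_0: "Lp_mem \<Omega> pbar (\<lambda>x. f x 0)"
    and A1_mono: "AE x in lebesgue_on \<Omega>. \<forall>y. fy x y \<ge> 0"
    and A1_bd: "\<forall>M>0. \<exists>C. AE x in lebesgue_on \<Omega>. \<forall>y. \<bar>y\<bar> \<le> M \<longrightarrow> \<bar>fy x y\<bar> + \<bar>fyy x y\<bar> \<le> C"
    \<comment> \<open>(A2)\<close>
    and A2_car: "C2_caratheodory \<Omega> L Ly Lyy"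
    and A2_0: "integrable (lebesgue_on \<Omega>) (\<lambda>x. L x 0)"
    and A2_bd1: "\<forall>M>0. \<exists>\<psi>. Lp_mem \<Omega> pbar \<psi> \<and>
                   (AE x in lebesgue_on \<Omega>. \<forall>y. \<bar>y\<bar> \<le> M \<longrightarrow> \<bar>Ly x y\<bar> \<le> \<psi> x)"
    and A2_bd2: "\<forall>M>0. \<exists>C. AE x in lebesgue_on \<Omega>. \<forall>y. \<bar>y\<bar> \<le> M \<longrightarrow> \<bar>Lyy x y\<bar> \<le> C"
    \<comment> \<open>reference perturbation and (A4) at ubar = \<open>\<bar>u\<^sub>\<bar>e\<close>\<close>
    and ebar: "in_E \<Omega> ebar"
    and ubar: "ubar \<in> Uad \<Omega> \<alpha> \<beta> ebar"
    and ybar: "state_sol \<Omega> a f (\<lambda>x. ubar x + e_y ebar x) ybar"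
    and phibar: "adjoint_sol \<Omega> a fy Ly ybar (e_J ebar) phibar"
    and A4_foc: "\<forall>u\<in>Uad \<Omega> \<alpha> \<beta> ebar. Jprime \<Omega> phibar (\<lambda>x. u x - ubar x) \<ge> 0"
    and A4_K: "K > 0" and A4_kappa: "varkappa > 0"
    and A4_growth: "\<forall>\<epsilon>>0. emeasure lebesgue {x\<in>\<Omega>. \<bar>phibar x\<bar> \<le> \<epsilon>} \<le> ennreal (K * \<epsilon> powr varkappa)"
    and sigma: "\<sigma> > 0"
    and gap: "AE x in lebesgue_on \<Omega>. \<beta> x + e_beta ebar x - (\<alpha> x + e_alpha ebar x) \<ge> \<sigma>"
    and eta: "0 < \<eta>" "\<eta> < \<sigma> / 4"
  shows "\<exists>c>0. \<exists>\<kappa>'>0. \<forall>e ue ye phie.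
      in_E \<Omega> e \<longrightarrow> E_norm \<Omega> (pert_diff e ebar) < \<eta> \<longrightarrow>
      ue \<in> Uad \<Omega> \<alpha> \<beta> e \<longrightarrow>
      state_sol \<Omega> a f (\<lambda>x. ue x + e_y e x) ye \<longrightarrow>
      adjoint_sol \<Omega> a fy Ly ye (e_J e) phie \<longrightarrow>
      (\<forall>u\<in>Uad \<Omega> \<alpha> \<beta> e. Jprime \<Omega> phie (\<lambda>x. u x - ue x) \<ge> 0) \<longrightarrow>
      (\<exists>u_e\<in>Uad \<Omega> \<alpha> \<beta> ebar.
         Linf_norm \<Omega> (\<lambda>x. ue x - u_e x) \<le> ereal (E_norm \<Omega> (pert_diff e ebar)) \<and>
         ereal (Jprime \<Omega> phie (\<lambda>x. ubar x - ue x) - Jprime \<Omega> phibar (\<lambda>x. ubar x - ue x))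
         \<ge> ereal (\<kappa>' * L1_norm \<Omega> (\<lambda>x. ue x - ubar x) powr (1 + 1 / varkappa))
           + ereal (1/2 * Jprime \<Omega> phibar (\<lambda>x. u_e x - ubar x))
           - ereal c * (ereal (E_norm \<Omega> (pert_diff e ebar) powr (1 / varkappa))
                        + Linf_norm \<Omega> (\<lambda>x. phie x - phibar x)
                        + ereal (L1_norm \<Omega> (\<lambda>x. ue x - ubar x)))
                     * ereal (E_norm \<Omega> (pert_diff e ebar)))"
proof -
  let ?M = "lebesgue_on \<Omega>"
  note fin = lebesgue_on_open_bounded(1)[OF dom(1,2,4)]
    and pos = lebesgue_on_open_bounded(2)[OF dom(1,2,4)]
  interpret finite_measure ?M by (rule fin)
  define lo hi where "lo x = \<alpha> x + e_alpha ebar x" and "hi x = \<beta> x + e_beta ebar x" for x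
  have lo: "Linf_mem \<Omega> lo" and hi: "Linf_mem \<Omega> hi"
    unfolding lo_def hi_def using ab(1,2) in_E_Linf_mem[OF ebar] by (auto intro: Linf_mem_add)
  obtain C where C: "0 \<le> C" "AE x in ?M. \<bar>lo x\<bar> \<le> C \<and> \<bar>hi x\<bar> \<le> C"
    using Linf_mem_common_bound[OF lo hi] by blast
  define T where "T = 2 * C + \<eta>"
  define \<kappa>' where "\<kappa>' = (1 / (2 * T * K)) powr (1 / varkappa) / 8"
  define c where "c = \<kappa>' * (4 * measure ?M (space ?M)) powr (1 + 1 / varkappa) + measure ?M (space ?M) + 1"
  have "0 < T" using C(1) eta unfolding T_def by simp
  then have "0 < \<kappa>'" using A4_K unfolding \<kappa>'_def by simp
  then have "0 < c" unfolding c_def by (intro add_nonneg_pos add_nonneg_nonneg) auto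
  have \<phi>: "integrable ?M phibar" using adjoint_sol_integrable[OF fin phibar] .
  have bb_bar: "AE x in ?M. bang_bang (lo x) (hi x) (phibar x) (ubar x)"
    unfolding lo_def hi_def by (rule bang_bang_of_Uad_variational_inequality[OF fin ab(1,2) ebar \<phi> ubar A4_foc])
  have growth: "measure ?M {x \<in> space ?M. \<bar>phibar x\<bar> \<le> \<epsilon>} \<le> K * \<epsilon> powr varkappa" if "0 < \<epsilon>" for \<epsilon>
    using measure_lebesgue_on_le[OF _ A4_growth[rule_format, OF that]] dom(1) A4_K by simp
  txt \<open>Only the variational inequalities, the growth condition and \<open>\<phi> \<in> L\<^sup>2\<close> are used:
    the clamped control is admissible as soon as the perturbed bounds are within \<open>D\<close> of the
    reference ones.\<close>
  show ?thesis (is "\<exists>c>0. \<exists>\<kappa>'>0. \<forall>e ue ye phie. _ \<longrightarrow> _ \<longrightarrow> _ \<longrightarrow> _ \<longrightarrow> _ \<longrightarrow> _ \<longrightarrow> ?estimate c \<kappa>' e ue phie")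
  proof (rule exI[of _ c], rule conjI[OF \<open>0 < c\<close>], rule exI[of _ \<kappa>'], rule conjI[OF \<open>0 < \<kappa>'\<close>],
      intro allI impI)
    fix e ue ye phie
    assume e: "in_E \<Omega> e" and D_less: "E_norm \<Omega> (pert_diff e ebar) < \<eta>" and ue: "ue \<in> Uad \<Omega> \<alpha> \<beta> e"
      and "state_sol \<Omega> a f (\<lambda>x. ue x + e_y e x) ye" and phie: "adjoint_sol \<Omega> a fy Ly ye (e_J e) phie"
      and vi: "\<forall>u\<in>Uad \<Omega> \<alpha> \<beta> e. 0 \<le> Jprime \<Omega> phie (\<lambda>x. u x - ue x)"
    define D where "D = E_norm \<Omega> (pert_diff e ebar)"
    note D_bounds = E_norm_pert_diff_bounds[OF pos e ebar, folded D_def]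
    have \<psi>: "integrable ?M phie" using adjoint_sol_integrable[OF fin phie] .
    have bb_e: "AE x in ?M. bang_bang (\<alpha> x + e_alpha e x) (\<beta> x + e_beta e x) (phie x) (ue x)"
      by (rule bang_bang_of_Uad_variational_inequality[OF fin ab(1,2) e \<psi> ue vi])
    have close: "AE x in ?M. \<bar>lo x - (\<alpha> x + e_alpha e x)\<bar> \<le> D \<and> \<bar>hi x - (\<beta> x + e_beta e x)\<bar> \<le> D"
      using D_bounds(2) by eventually_elim (auto simp: lo_def hi_def abs_minus_commute)
    have meas: "lo \<in> borel_measurable ?M" "hi \<in> borel_measurable ?M"
      "ubar \<in> borel_measurable ?M" "ue \<in> borel_measurable ?M"
      using lo hi ubar ue unfolding Linf_mem_def Uad_def by auto
    have "2 * C + D \<le> T" using D_less unfolding T_def D_def by simp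
    from bang_bang_stability_estimate_esssup[OF pos \<phi> \<psi> meas bb_bar bb_e close C(2) D_bounds(1) \<open>0 < T\<close> this
        A4_K A4_kappa growth]
    show "?estimate c \<kappa>' e ue phie"
      unfolding \<kappa>'_def[symmetric] c_def[symmetric] D_def Linf_norm_def L1_norm_def Jprime_def Uad_def
        lo_def hi_def by auto
  qed
qed

end
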